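(* Let $X$ be an r.i. space and let $I$ be a quasiconcave function satisfying $\int_0^t\frac{I(s)}{s}ds\lesssim I(t)$ for $t\in(0,1)$. Then $$\left\|\frac{t}{I(t)}(T_If)^{**}(t)\right\|_X\lesssim\left\|\frac{t}{I(t)}f^{**}(t)\right\|_X,\quad f\in\mathcal M_+(0,1).$$ In other words, $T_I$ is bounded on $(Y_Z)'$ for every r.i. space $Z$, where $Y_Z$ is the optimal target space of $Z$ under $H_I$.
   Context: Functions live on $(0,1)$; $\mathcal M_+(0,1)$ nonnegative measurable functions; $f^*$ nonincreasing rearrangement; $f^{**}(t)=\frac1t\int_0^tf^*$. An r.i. space is a rearrangement-invariant Banach function space on $(0,1)$, $X'$ its associate space ($\|g\|_{X'}=\sup_{\|f\|_X\le1}\int fg$). A quasiconcave function is a nondecreasing bijection $I:(0,1)\to(0,1)$ with $I(0+)=0$, $I(1-)=1$ and $I(t)/t$ nonincreasing. $T_If(t)=\frac{I(t)}{t}\sup_{t\le s<1}\frac{s}{I(s)}f^*(s)$, $H_If(t)=\int_t^1\frac{f(s)}{I(s)}ds$. The optimal target space $Y_Z$ of $Z$ under $H_I$ is the r.i. space with $H_I:Z\to Y_Z$ bounded and $Y_Z\hookrightarrow W$ whenever $H_I:Z\to W$ is bounded for an r.i. space $W$; it is known that $\|g\|_{(Y_Z)'}=\|\frac1{I(t)}\int_0^tg^*(s)ds\|_{Z'}$. $\lesssim$: up to a constant independent of $f$. *)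

theory Defs
  imports "HOL-Analysis.Analysis"
begin

definition M01 :: "real measure" where
  "M01 = lebesgue_on {0<..<1}"

text \<open>Functions in M_+(0,1) are modelled as measurable functions with values in [0,\<infinity>].\<close>

definition distrib :: "(real \<Rightarrow> ennreal) \<Rightarrow> ennreal \<Rightarrow> ennreal" where
  "distrib f y = emeasure M01 {x \<in> space M01. f x > y}"

definition rearr :: "(real \<Rightarrow> ennreal) \<Rightarrow> real \<Rightarrow> ennreal" where
  "rearr f t = Inf {y. distrib f y \<le> ennreal t}"

definition rearr2 :: "(real \<Rightarrow> ennreal) \<Rightarrow> real \<Rightarrow> ennreal" where
  "rearr2 f t = ennreal (1 / t) * (\<integral>\<^sup>+ s \<in> {0<..<t}. rearr f s \<partial>lborel)"

text \<open>Banach function norm on (0,1) (Bennett--Sharpley axioms P1--P5), rearrangement invariant.\<close>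
definition ri_norm :: "((real \<Rightarrow> ennreal) \<Rightarrow> ennreal) \<Rightarrow> bool" where
  "ri_norm \<rho> \<longleftrightarrow>
     \<comment> \<open>P1\<close>
     (\<forall>f \<in> borel_measurable M01. \<rho> f = 0 \<longleftrightarrow> (AE x in M01. f x = 0)) \<and>
     (\<forall>f \<in> borel_measurable M01. \<forall>a::real. a \<ge> 0 \<longrightarrow>
        \<rho> (\<lambda>x. ennreal a * f x) = ennreal a * \<rho> f) \<and>
     (\<forall>f \<in> borel_measurable M01. \<forall>g \<in> borel_measurable M01.
        \<rho> (\<lambda>x. f x + g x) \<le> \<rho> f + \<rho> g) \<and>
     \<comment> \<open>P2 (lattice property)\<close>
     (\<forall>f \<in> borel_measurable M01. \<forall>g \<in> borel_measurable M01.
        (AE x in M01. g x \<le> f x) \<longrightarrow> \<rho> g \<le> \<rho> f) \<and>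
     \<comment> \<open>P3 (Fatou property)\<close>
     (\<forall>fs f. (\<forall>n. fs n \<in> borel_measurable M01) \<longrightarrow> f \<in> borel_measurable M01 \<longrightarrow>
        (AE x in M01. incseq (\<lambda>n. fs n x) \<and> f x = (SUP n. fs n x)) \<longrightarrow>
        \<rho> f = (SUP n. \<rho> (fs n))) \<and>
     \<comment> \<open>P4\<close>
     (\<forall>E \<in> sets M01. \<rho> (indicator E) < \<infinity>) \<and>
     \<comment> \<open>P5\<close>
     (\<forall>E \<in> sets M01. \<exists>C::real. \<forall>f \<in> borel_measurable M01.
        (\<integral>\<^sup>+ x \<in> E. f x \<partial>M01) \<le> ennreal C * \<rho> f) \<and>
     \<comment> \<open>rearrangement invariance\<close>
     (\<forall>f \<in> borel_measurable M01. \<forall>g \<in> borel_measurable M01.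
        distrib f = distrib g \<longrightarrow> \<rho> f = \<rho> g)"

definition quasiconcave :: "(real \<Rightarrow> real) \<Rightarrow> bool" where
  "quasiconcave I \<longleftrightarrow>
     bij_betw I {0<..<1} {0<..<1} \<and> mono_on {0<..<1} I \<and>
     (I \<longlongrightarrow> 0) (at_right 0) \<and> (I \<longlongrightarrow> 1) (at_left 1) \<and>
     antimono_on {0<..<1} (\<lambda>t. I t / t)"

definition T_op :: "(real \<Rightarrow> real) \<Rightarrow> (real \<Rightarrow> ennreal) \<Rightarrow> real \<Rightarrow> ennreal" where
  "T_op I f t = ennreal (I t / t) * (SUP s \<in> {t..<1}. ennreal (s / I s) * rearr f s)"

end

theory Submission
  imports Defs
begin

text \<open>
  Write \<open>F(t) = \<integral>\<^sub>0\<^sup>t f\<^sup>*\<close>, \<open>R(t) = t f\<^sup>*\<^sup>*(t) / I(t) = F(t) / I(t)\<close> and let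
  \<open>D(t) = sup {R(u) | t \<le> u < 1}\<close> be the least nonincreasing majorant of \<open>R\<close>.
  Since \<open>F\<close> and \<open>I\<close> increase while \<open>F(t)/t\<close> and \<open>I(t)/t\<close> decrease,
  \<open>R(u) \<le> 4 R(w)\<close> whenever \<open>u/4 < w < 2u\<close>; so every level set of \<open>D/4\<close> is dominated in measure by the corresponding level set of \<open>R\<close>,
  and rearrangement invariance gives \<open>\<rho>(D) \<le> 8 \<rho>(R)\<close>.

  It remains to bound \<open>t (T f)\<^sup>*\<^sup>*(t) / I(t)\<close> pointwise by a multiple of \<open>D(t)\<close>.
  As \<open>T f\<close> is nonincreasing,
  \<open>(T f)\<^sup>*(s) \<le> T f(s/2) \<le> 2 (I(s)/s) sup {u f\<^sup>*(u) / I(u) | s/2 \<le> u < 1}\<close>.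
  The part of the supremum over \<open>u \<ge> t\<close> is at most \<open>D(t)\<close>; for \<open>s/2 \<le> u < t\<close> one uses
  \<open>u f\<^sup>*(u) \<le> 2 \<integral>\<^bsub>u/2\<^esub>\<^bsup>u\<^esup> f\<^sup>*\<close>. Integrating over \<open>s \<in> (0,t)\<close>, exchanging the order of
  integration and applying \<open>\<integral>\<^sub>0\<^sup>t I(s)/s ds \<le> C I(t)\<close> yields
  \<open>\<integral>\<^sub>0\<^sup>t (T f)\<^sup>* \<le> 2C I(t) D(t) + 4(2C + 2) F(t)\<close>.
\<close>

lemma space_M01 [simp]: "space M01 = {0<..<1}"
  by (simp add: M01_def)

lemma sets_M01I: "A \<in> sets borel \<Longrightarrow> A \<subseteq> {0<..<1} \<Longrightarrow> A \<in> sets M01"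
  unfolding M01_def by (subst sets_restrict_space_iff) auto

lemma emeasure_M01: "A \<in> sets borel \<Longrightarrow> A \<subseteq> {0<..<1} \<Longrightarrow> emeasure M01 A = emeasure lborel A"
  unfolding M01_def by (subst emeasure_restrict_space) auto

lemma emeasure_M01_interval [simp]:
  "0 \<le> a \<Longrightarrow> a \<le> b \<Longrightarrow> b \<le> 1 \<Longrightarrow> emeasure M01 {a<..<b} = ennreal (b - a)"
  by (subst emeasure_M01) auto

lemma is_interval_superlevel_set:
  fixes g :: "real \<Rightarrow> 'a::linorder"
  assumes A: "is_interval A" and g: "mono_on A g \<or> antimono_on A g"
  shows "is_interval {x\<in>A. y < g x}"
  unfolding is_interval_1
proof (intro ballI allI impI)
  fix a b x
  assume a: "a \<in> {x\<in>A. y < g x}" and b: "b \<in> {x\<in>A. y < g x}" and x: "a \<le> x \<and> x \<le> b"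
  then have "x \<in> A" using A by (auto simp: is_interval_1)
  moreover have "g a \<le> g x \<or> g b \<le> g x"
    using g a b x \<open>x \<in> A\<close> by (auto simp: monotone_on_def)
  ultimately show "x \<in> {x\<in>A. y < g x}" using a b by auto
qed

lemma measurable_M01_if_superlevel_intervals:
  fixes g :: "real \<Rightarrow> ennreal"
  assumes "\<And>y. is_interval {x\<in>{0<..<1}. y < g x}"
  shows "g \<in> borel_measurable M01"
  using assms by (intro borel_measurableI_greater sets_M01I) (auto simp: real_interval_borel_measurable)

lemma mono_on_measurable_M01:
  fixes g :: "real \<Rightarrow> ennreal"
  shows "mono_on {0<..<1} g \<Longrightarrow> g \<in> borel_measurable M01"
  by (intro measurable_M01_if_superlevel_intervals is_interval_superlevel_set) auto

lemma antimono_on_measurable_M01: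
  fixes g :: "real \<Rightarrow> ennreal"
  shows "antimono_on {0<..<1} g \<Longrightarrow> g \<in> borel_measurable M01"
  by (intro measurable_M01_if_superlevel_intervals is_interval_superlevel_set) auto

lemma antimono_borel_measurable:
  fixes g :: "real \<Rightarrow> ennreal"
  assumes "antimono g"
  shows "g \<in> borel_measurable borel"
proof (rule borel_measurableI_greater)
  fix y
  have "is_interval {x\<in>UNIV. y < g x}"
    using assms by (intro is_interval_superlevel_set) (auto simp: monotone_on_def antimono_def)
  then show "{x \<in> space borel. y < g x} \<in> sets borel"
    by (simp add: real_interval_borel_measurable)
qed

lemma ri_norm_mono:
  assumes "ri_norm \<rho>" "f \<in> borel_measurable M01" "g \<in> borel_measurable M01"
    and "\<And>x. x \<in> {0<..<1} \<Longrightarrow> g x \<le> f x"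
  shows "\<rho> g \<le> \<rho> f"
proof -
  have "AE x in M01. g x \<le> f x" using assms(4) by (intro AE_I2) simp
  then show ?thesis using assms(1-3) unfolding ri_norm_def by blast
qed

lemma ri_norm_cmult:
  "ri_norm \<rho> \<Longrightarrow> f \<in> borel_measurable M01 \<Longrightarrow> 0 \<le> a \<Longrightarrow>
    \<rho> (\<lambda>x. ennreal a * f x) = ennreal a * \<rho> f"
  unfolding ri_norm_def by blast

lemma ri_norm_add:
  "ri_norm \<rho> \<Longrightarrow> f \<in> borel_measurable M01 \<Longrightarrow> g \<in> borel_measurable M01 \<Longrightarrow>
    \<rho> (\<lambda>x. f x + g x) \<le> \<rho> f + \<rho> g"
  unfolding ri_norm_def by blast

lemma ri_norm_eq_if_distrib_eq:
  "ri_norm \<rho> \<Longrightarrow> f \<in> borel_measurable M01 \<Longrightarrow> g \<in> borel_measurable M01 \<Longrightarrow>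
    distrib f = distrib g \<Longrightarrow> \<rho> f = \<rho> g"
  unfolding ri_norm_def by blast

lemma distrib_le_1: "distrib f y \<le> 1"
proof -
  have "distrib f y \<le> emeasure M01 (space M01)"
    unfolding distrib_def by (rule emeasure_space)
  then show ?thesis by simp
qed

lemma distrib_antimono:
  assumes "f \<in> borel_measurable M01" "y \<le> z"
  shows "distrib f z \<le> distrib f y"
  unfolding distrib_def
proof (rule emeasure_mono)
  show "{x \<in> space M01. y < f x} \<in> sets M01"
    using assms(1) by measurable
qed (use assms(2) in \<open>auto intro: le_less_trans\<close>)

lemma rearr_antimono: "t \<le> t' \<Longrightarrow> rearr f t' \<le> rearr f t"
  unfolding rearr_def by (rule Inf_superset_mono) (auto intro: order_trans ennreal_leI)

lemma rearr_measurable_M01: "rearr f \<in> borel_measurable M01"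
  by (rule antimono_on_measurable_M01) (simp add: monotone_on_def rearr_antimono)

lemma rearr_borel_measurable [measurable]: "rearr f \<in> borel_measurable borel"
  by (rule antimono_borel_measurable) (simp add: antimonoI rearr_antimono)

lemma distrib_rearr_le:
  assumes f: "f \<in> borel_measurable M01"
  shows "distrib f (rearr f t) \<le> ennreal t"
proof -
  define S where "S = {y. distrib f y \<le> ennreal t}"
  have "top \<in> S" by (simp add: S_def distrib_def)
  then obtain z where z: "decseq z" "range z \<subseteq> S" and inf: "rearr f t = (INF n. z n)"
    using ennreal_Inf_countable_INF[of S] unfolding rearr_def S_def by blast
  have "{x \<in> space M01. rearr f t < f x} = (\<Union>n. {x \<in> space M01. z n < f x})"
    unfolding inf by (auto simp: INF_less_iff)
  moreover have "incseq (\<lambda>n. {x \<in> space M01. z n < f x})"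
    using z(1) by (auto simp: incseq_def decseq_def intro: le_less_trans)
  moreover have "{x \<in> space M01. z n < f x} \<in> sets M01" for n
    using f by measurable
  ultimately have "distrib f (rearr f t) = (SUP n. distrib f (z n))"
    unfolding distrib_def by (simp add: SUP_emeasure_incseq image_subset_iff)
  also have "\<dots> \<le> ennreal t"
    using z(2) by (auto simp: S_def intro: SUP_least)
  finally show ?thesis .
qed

lemma less_rearr_iff:
  assumes f: "f \<in> borel_measurable M01"
  shows "y < rearr f t \<longleftrightarrow> ennreal t < distrib f y"
proof
  assume "y < rearr f t"
  then show "ennreal t < distrib f y"
    unfolding rearr_def by (meson Inf_lower mem_Collect_eq not_le)
next
  assume "ennreal t < distrib f y"
  moreover have "rearr f t \<le> y \<Longrightarrow> distrib f y \<le> ennreal t"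
    using distrib_antimono[OF f] distrib_rearr_le[OF f] by (blast intro: order_trans)
  ultimately show "y < rearr f t" by (meson not_le)
qed

lemma distrib_rearr:
  assumes f: "f \<in> borel_measurable M01"
  shows "distrib (rearr f) = distrib f"
proof
  fix y
  define r where "r = enn2real (distrib f y)"
  have r: "distrib f y = ennreal r" and r01: "0 \<le> r" "r \<le> 1"
    using distrib_le_1[of f y]
    by (auto simp: r_def ennreal_enn2real_if top_unique enn2real_leI)
  have "{x \<in> space M01. y < rearr f x} = {0<..<r}"
    using r01 by (auto simp: less_rearr_iff[OF f] r ennreal_less_iff)
  then have "distrib (rearr f) y = ennreal r"
    unfolding distrib_def using r01 by simp
  then show "distrib (rearr f) y = distrib f y"
    by (simp add: r)
qed

lemma rearr_mono_if_distrib_le: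
  "(\<And>y. distrib f y \<le> distrib g y) \<Longrightarrow> rearr f t \<le> rearr g t"
  unfolding rearr_def by (rule Inf_superset_mono) (auto intro: order_trans)

lemma ri_norm_le_if_distrib_le:
  assumes \<rho>: "ri_norm \<rho>" and f: "f \<in> borel_measurable M01" and g: "g \<in> borel_measurable M01"
    and le: "\<And>y. distrib f y \<le> distrib g y"
  shows "\<rho> f \<le> \<rho> g"
proof -
  have "\<rho> f = \<rho> (rearr f)"
    using distrib_rearr[OF f] by (intro ri_norm_eq_if_distrib_eq[OF \<rho> f rearr_measurable_M01]) simp
  also have "\<dots> \<le> \<rho> (rearr g)"
    using rearr_mono_if_distrib_le[OF le]
    by (intro ri_norm_mono[OF \<rho> rearr_measurable_M01 rearr_measurable_M01])
  also have "\<dots> = \<rho> g"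
    using distrib_rearr[OF g] by (intro ri_norm_eq_if_distrib_eq[OF \<rho> rearr_measurable_M01 g]) simp
  finally show ?thesis .
qed

lemma ri_norm_le_if_distrib_dilation_le:
  assumes \<rho>: "ri_norm \<rho>" and g: "g \<in> borel_measurable M01" and h: "h \<in> borel_measurable M01"
    and c: "0 < c" and le: "\<And>y. distrib g (ennreal c * y) \<le> distrib h y"
  shows "\<rho> g \<le> ennreal c * \<rho> h"
proof -
  define g' where "g' x = ennreal (1 / c) * g x" for x
  have g'_meas: "g' \<in> borel_measurable M01" unfolding g'_def using g by measurable
  have c_g': "ennreal c * g' x = g x" for x
    using c by (simp add: g'_def mult.assoc[symmetric] ennreal_mult[symmetric])
  have "y < g' x \<longleftrightarrow> ennreal c * y < g x" for x y
    using c ennreal_mult_le_mult_iff[of "ennreal c" "g' x" y] by (simp add: c_g' not_le[symmetric])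
  then have "distrib g' y = distrib g (ennreal c * y)" for y
    by (simp add: distrib_def)
  then have "\<rho> g' \<le> \<rho> h"
    using le by (intro ri_norm_le_if_distrib_le[OF \<rho> g'_meas h]) simp
  moreover have "\<rho> g = ennreal c * \<rho> g'"
    using ri_norm_cmult[OF \<rho> g'_meas, of c] c by (simp add: c_g')
  ultimately show ?thesis by (simp add: mult_left_mono)
qed

lemma ennreal_less_cancel_4: "4 * (y::ennreal) < 4 * z \<Longrightarrow> y < z"
  using ennreal_mult_le_mult_iff[of 4 z y] by (simp add: not_le[symmetric])

definition rearr_integral :: "(real \<Rightarrow> ennreal) \<Rightarrow> real \<Rightarrow> ennreal" where
  "rearr_integral f t = (\<integral>\<^sup>+ s \<in> {0<..<t}. rearr f s \<partial>lborel)"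

lemma rearr2_eq: "rearr2 f t = ennreal (1 / t) * rearr_integral f t"
  unfolding rearr2_def rearr_integral_def ..

lemma rearr_integral_mono: "s \<le> t \<Longrightarrow> rearr_integral f s \<le> rearr_integral f t"
  unfolding rearr_integral_def by (intro nn_integral_mono) (auto simp: indicator_def)

lemma rearr_integral_measurable_M01: "rearr_integral f \<in> borel_measurable M01"
  by (rule mono_on_measurable_M01) (auto intro!: mono_onI rearr_integral_mono)

lemma rearr_integral_rescale:
  assumes "0 < t"
  shows "rearr_integral f t = ennreal t * (\<integral>\<^sup>+ x \<in> {0<..<1}. rearr f (t * x) \<partial>lborel)"
proof -
  have "rearr_integral f t
      = ennreal t * (\<integral>\<^sup>+ x. rearr f (0 + t * x) * indicator {0<..<t} (0 + t * x) \<partial>lborel)"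
    unfolding rearr_integral_def using assms by (subst nn_integral_real_affine[of _ t 0]) auto
  also have "(\<lambda>x. rearr f (0 + t * x) * indicator {0<..<t} (0 + t * x))
      = (\<lambda>x. rearr f (t * x) * indicator {0<..<1} x)"
    using assms by (auto simp: indicator_def fun_eq_iff zero_less_mult_iff mult_less_cancel_left1)
  finally show ?thesis .
qed

lemma rearr_integral_le_ratio:
  assumes "0 < w" "w \<le> u"
  shows "rearr_integral f u \<le> ennreal (u / w) * rearr_integral f w"
proof -
  have "(\<integral>\<^sup>+ x \<in> {0<..<1}. rearr f (u * x) \<partial>lborel)
      \<le> (\<integral>\<^sup>+ x \<in> {0<..<1}. rearr f (w * x) \<partial>lborel)"
    using assms by (intro nn_integral_mono) (auto simp: indicator_def intro!: rearr_antimono)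
  moreover have "ennreal u = ennreal (u / w) * ennreal w"
    using assms by (simp add: ennreal_mult[symmetric])
  ultimately show ?thesis
    using assms by (simp add: rearr_integral_rescale mult.assoc mult_left_mono)
qed

lemma rearr_le_interval_integral:
  assumes "a \<le> b"
  shows "ennreal (b - a) * rearr f b \<le> (\<integral>\<^sup>+ s \<in> {a<..<b}. rearr f s \<partial>lborel)"
proof -
  have "ennreal (b - a) * rearr f b = (\<integral>\<^sup>+ s. rearr f b * indicator {a<..<b} s \<partial>lborel)"
    using assms by (simp add: nn_integral_cmult_indicator mult.commute)
  also have "\<dots> \<le> (\<integral>\<^sup>+ s \<in> {a<..<b}. rearr f s \<partial>lborel)"
    by (intro nn_integral_mono) (auto simp: indicator_def intro: rearr_antimono)
  finally show ?thesis .
qed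

locale quasiconcave_fun =
  fixes I :: "real \<Rightarrow> real"
  assumes quasiconcave: "quasiconcave I"
begin

lemma I_pos: "0 < x \<Longrightarrow> x < 1 \<Longrightarrow> 0 < I x"
  and I_less_1: "0 < x \<Longrightarrow> x < 1 \<Longrightarrow> I x < 1"
  using quasiconcave unfolding quasiconcave_def bij_betw_def by auto

lemma I_mono: "0 < x \<Longrightarrow> x \<le> y \<Longrightarrow> y < 1 \<Longrightarrow> I x \<le> I y"
  using quasiconcave unfolding quasiconcave_def by (auto intro: mono_onD)

lemma I_div_antimono: "0 < x \<Longrightarrow> x \<le> y \<Longrightarrow> y < 1 \<Longrightarrow> I y / y \<le> I x / x"
  using quasiconcave monotone_onD[of "{0<..<1}" "(\<le>)" "(\<ge>)" "\<lambda>t. I t / t" x y]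
  unfolding quasiconcave_def by auto

lemma I_le_ratio: "0 < x \<Longrightarrow> x \<le> y \<Longrightarrow> y < 1 \<Longrightarrow> I y \<le> (y / x) * I x"
  using I_div_antimono[of x y] by (simp add: field_simps)

text \<open>Extending \<open>I\<close> monotonically to the whole line makes the kernel below Borel on the plane.\<close>

definition I_ext :: "real \<Rightarrow> real" where
  "I_ext x = (if x \<le> 0 then 0 else if x < 1 then I x else 1)"

lemma I_ext_eq [simp]: "0 < x \<Longrightarrow> x < 1 \<Longrightarrow> I_ext x = I x"
  by (simp add: I_ext_def)

lemma mono_I_ext: "mono I_ext"
  unfolding I_ext_def
  by (rule monoI) (auto intro: I_mono less_imp_le[OF I_less_1] less_imp_le[OF I_pos])

lemma I_ext_borel_measurable [measurable]: "I_ext \<in> borel_measurable borel"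
  by (rule borel_measurable_mono[OF mono_I_ext])

lemma div_I_measurable_M01: "(\<lambda>t. ennreal (t / I t)) \<in> borel_measurable M01"
proof (rule mono_on_measurable_M01, rule mono_onI)
  fix r s :: real assume "r \<in> {0<..<1}" "s \<in> {0<..<1}" "r \<le> s"
  then show "ennreal (r / I r) \<le> ennreal (s / I s)"
    using I_le_ratio[of r s] I_pos[of r] I_pos[of s] by (intro ennreal_leI) (simp add: field_simps)
qed

definition weighted_max :: "(real \<Rightarrow> ennreal) \<Rightarrow> real \<Rightarrow> ennreal" where
  "weighted_max f t = ennreal (t / I t) * rearr2 f t"

lemma weighted_max_eq:
  "0 < t \<Longrightarrow> t < 1 \<Longrightarrow> weighted_max f t = ennreal (1 / I t) * rearr_integral f t"
  unfolding weighted_max_def rearr2_eq using I_pos[of t]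
  by (simp add: mult.assoc[symmetric] ennreal_mult[symmetric])

lemma weighted_max_measurable: "weighted_max f \<in> borel_measurable M01"
proof -
  have "(\<lambda>t::real. ennreal (1 / t)) \<in> borel_measurable M01"
    by (rule antimono_on_measurable_M01) (auto intro!: monotone_onI ennreal_leI frac_le)
  then show ?thesis
    unfolding weighted_max_def[abs_def] rearr2_eq
    using div_I_measurable_M01 rearr_integral_measurable_M01 by measurable
qed

lemma weighted_max_le_ratio_left:
  assumes "0 < w" "w \<le> u" "u < 1"
  shows "weighted_max f u \<le> ennreal (u / w) * weighted_max f w"
proof -
  have "ennreal (1 / I u) \<le> ennreal (1 / I w)"
    using assms I_pos[of w] I_mono[of w u] by (intro ennreal_leI frac_le) auto
  then have "weighted_max f u \<le> ennreal (1 / I w) * (ennreal (u / w) * rearr_integral f w)"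
    using assms by (auto simp: weighted_max_eq intro!: mult_mono rearr_integral_le_ratio)
  then show ?thesis
    using assms by (simp add: weighted_max_eq mult_ac)
qed

lemma weighted_max_le_ratio_right:
  assumes "0 < u" "u \<le> w" "w < 1"
  shows "weighted_max f u \<le> ennreal (w / u) * weighted_max f w"
proof -
  have "1 / I u \<le> w / u * (1 / I w)"
    using assms I_le_ratio[of u w] I_pos[of u] I_pos[of w] by (simp add: field_simps)
  then have "ennreal (1 / I u) \<le> ennreal (w / u) * ennreal (1 / I w)"
    using assms I_pos[of w] by (subst ennreal_mult[symmetric]) (auto intro: ennreal_leI)
  then have "weighted_max f u \<le> ennreal (w / u) * ennreal (1 / I w) * rearr_integral f w"
    using assms by (auto simp: weighted_max_eq intro!: mult_mono rearr_integral_mono)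
  then show ?thesis
    using assms by (simp add: weighted_max_eq mult_ac)
qed

lemma weighted_max_le_4:
  assumes "0 < u" "u < 1" "u / 4 < w" "w < 2 * u" "w < 1"
  shows "weighted_max f u \<le> 4 * weighted_max f w"
proof (cases "w \<le> u")
  case True
  then have "weighted_max f u \<le> ennreal (u / w) * weighted_max f w"
    using assms by (intro weighted_max_le_ratio_left) auto
  also have "\<dots> \<le> ennreal 4 * weighted_max f w"
    using assms by (intro mult_right_mono ennreal_leI) (auto simp: field_simps)
  finally show ?thesis by simp
next
  case False
  then have "weighted_max f u \<le> ennreal (w / u) * weighted_max f w"
    using assms by (intro weighted_max_le_ratio_right) auto
  also have "\<dots> \<le> ennreal 4 * weighted_max f w"
    using assms by (intro mult_right_mono ennreal_leI) (auto simp: field_simps)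
  finally show ?thesis by simp
qed

lemma distrib_weighted_max_ge:
  assumes "0 < u" "u < 1" and less: "4 * y < weighted_max f u"
  shows "ennreal (min u (3/4)) \<le> distrib (weighted_max f) y"
proof -
  define m where "m = min (2 * u) 1"
  have "{u/4<..<m} \<subseteq> {x \<in> space M01. y < weighted_max f x}"
  proof
    fix w assume w: "w \<in> {u/4<..<m}"
    then have "4 * y < 4 * weighted_max f w"
      using assms by (auto simp: m_def intro: less_le_trans less intro!: weighted_max_le_4)
    then show "w \<in> {x \<in> space M01. y < weighted_max f x}"
      using w assms by (auto simp: m_def dest: ennreal_less_cancel_4)
  qed
  then have "emeasure M01 {u/4<..<m} \<le> distrib (weighted_max f) y"
    unfolding distrib_def using weighted_max_measurable by (intro emeasure_mono) measurable
  moreover have "ennreal (min u (3/4)) \<le> emeasure M01 {u/4<..<m}"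
    using assms by (auto simp: m_def intro!: ennreal_leI)
  ultimately show ?thesis by order
qed

definition weighted_max_majorant :: "(real \<Rightarrow> ennreal) \<Rightarrow> real \<Rightarrow> ennreal" where
  "weighted_max_majorant f t = (SUP u\<in>{t..<1}. weighted_max f u)"

lemma weighted_max_majorant_measurable: "weighted_max_majorant f \<in> borel_measurable M01"
  unfolding weighted_max_majorant_def
  by (rule antimono_on_measurable_M01) (auto intro!: monotone_onI SUP_subset_mono)

lemma weighted_max_le_majorant: "t < 1 \<Longrightarrow> weighted_max f t \<le> weighted_max_majorant f t"
  unfolding weighted_max_majorant_def by (intro SUP_upper) auto

lemma weighted_max_majorant_superlevel:
  assumes "0 < x" "x < 1" and "4 * y < weighted_max_majorant f x"
  shows "\<exists>u\<ge>x. ennreal (min u (3/4)) \<le> distrib (weighted_max f) y"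
proof -
  obtain u where "u \<in> {x..<1}" "4 * y < weighted_max f u"
    using assms(3) by (auto simp: weighted_max_majorant_def less_SUP_iff)
  then show ?thesis
    using assms by (intro exI[of _ u]) (auto intro: distrib_weighted_max_ge)
qed

text \<open>The interval \<open>(u/4, min (2u) 1)\<close> used above has measure only \<open>min u (3/4)\<close>;
  therefore the majorant is split at \<open>3/4\<close>.\<close>

lemma distrib_weighted_max_majorant_left:
  "distrib (\<lambda>x. weighted_max_majorant f x * indicator {0<..3/4} x) (4 * y)
     \<le> distrib (weighted_max f) y"
proof -
  define r where "r = enn2real (distrib (weighted_max f) y)"
  have r: "distrib (weighted_max f) y = ennreal r" and r01: "0 \<le> r" "r \<le> 1"
    using distrib_le_1[of "weighted_max f" y]
    by (auto simp: r_def ennreal_enn2real_if top_unique enn2real_leI)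
  have "{x \<in> space M01. 4 * y < weighted_max_majorant f x * indicator {0<..3/4} x} \<subseteq> {0<..min r (3/4)}"
  proof
    fix x assume "x \<in> {x \<in> space M01. 4 * y < weighted_max_majorant f x * indicator {0<..3/4} x}"
    then have x: "0 < x" "x \<le> 3/4" "x < 1" and "4 * y < weighted_max_majorant f x"
      by (cases "x \<le> 3/4"; simp add: indicator_def)+
    then obtain u where "x \<le> u" "min u (3/4) \<le> r"
      using weighted_max_majorant_superlevel[of x y f] r r01 by auto
    then show "x \<in> {0<..min r (3/4)}"
      using x by auto
  qed
  then have "distrib (\<lambda>x. weighted_max_majorant f x * indicator {0<..3/4} x) (4 * y)
      \<le> emeasure M01 {0<..min r (3/4)}"
    unfolding distrib_def by (rule emeasure_mono) (auto intro!: sets_M01I)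
  also have "\<dots> = ennreal (min r (3/4))"
    using r01 by (subst emeasure_M01) auto
  also have "\<dots> \<le> distrib (weighted_max f) y"
    using r01 by (simp add: r ennreal_leI)
  finally show ?thesis .
qed

lemma distrib_weighted_max_majorant_right:
  "distrib (\<lambda>x. weighted_max_majorant f x * indicator {3/4<..<1} x) (4 * y)
     \<le> distrib (weighted_max f) y"
proof (cases "\<exists>x\<in>{3/4<..<1}. 4 * y < weighted_max_majorant f x")
  case True
  then obtain x where x: "3/4 < x" "x < 1" "4 * y < weighted_max_majorant f x"
    by auto
  then obtain u where "x \<le> u" "ennreal (min u (3/4)) \<le> distrib (weighted_max f) y"
    using weighted_max_majorant_superlevel[of x y f] by auto
  then have "ennreal (3/4) \<le> distrib (weighted_max f) y"
    using x by (simp add: min_def)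
  moreover have "distrib (\<lambda>x. weighted_max_majorant f x * indicator {3/4<..<1} x) (4 * y)
      \<le> emeasure M01 {3/4<..<1::real}"
    unfolding distrib_def by (rule emeasure_mono) (auto simp: indicator_def intro!: sets_M01I)
  moreover have "emeasure M01 {3/4<..<1::real} \<le> ennreal (3/4)"
    by (simp add: ennreal_leI)
  ultimately show ?thesis
    by order
next
  case False
  then have "{x \<in> space M01. 4 * y < weighted_max_majorant f x * indicator {3/4<..<1} x} = {}"
    by (auto simp: indicator_def)
  then show ?thesis
    unfolding distrib_def by (simp only: emeasure_empty zero_le)
qed

lemma ri_norm_weighted_max_majorant_le:
  assumes \<rho>: "ri_norm \<rho>"
  shows "\<rho> (weighted_max_majorant f) \<le> 8 * \<rho> (weighted_max f)"
proof -
  let ?D = "weighted_max_majorant f" and ?R = "weighted_max f"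
  define D1 where "D1 x = ?D x * indicator {0<..3/4} x" for x
  define D2 where "D2 x = ?D x * indicator {3/4<..<1} x" for x
  have S1: "{0<..3/4::real} \<in> sets M01" and S2: "{3/4<..<1::real} \<in> sets M01"
    by (auto intro!: sets_M01I)
  have D1: "D1 \<in> borel_measurable M01" and D2: "D2 \<in> borel_measurable M01"
    unfolding D1_def[abs_def] D2_def[abs_def]
    using weighted_max_majorant_measurable S1 S2 by measurable
  have "\<rho> ?D \<le> \<rho> (\<lambda>x. D1 x + D2 x)"
    using borel_measurable_add[OF D1 D2]
    by (rule ri_norm_mono[OF \<rho> _ weighted_max_majorant_measurable])
      (auto simp: D1_def D2_def indicator_def)
  also have "\<dots> \<le> \<rho> D1 + \<rho> D2"
    by (rule ri_norm_add[OF \<rho> D1 D2])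
  also have "\<dots> \<le> ennreal 4 * \<rho> ?R + ennreal 4 * \<rho> ?R"
  proof (rule add_mono)
    show "\<rho> D1 \<le> ennreal 4 * \<rho> ?R"
      by (rule ri_norm_le_if_distrib_dilation_le[OF \<rho> D1 weighted_max_measurable])
        (simp_all add: D1_def[abs_def] distrib_weighted_max_majorant_left)
    show "\<rho> D2 \<le> ennreal 4 * \<rho> ?R"
      by (rule ri_norm_le_if_distrib_dilation_le[OF \<rho> D2 weighted_max_measurable])
        (simp_all add: D2_def[abs_def] distrib_weighted_max_majorant_right)
  qed
  finally show ?thesis
    by (simp add: distrib_right[symmetric])
qed

definition weighted_rearr_sup :: "(real \<Rightarrow> ennreal) \<Rightarrow> real \<Rightarrow> real \<Rightarrow> ennreal" where
  "weighted_rearr_sup f a b = (SUP u\<in>{a..<b}. ennreal (u / I u) * rearr f u)"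

lemma T_op_eq: "T_op I f t = ennreal (I t / t) * weighted_rearr_sup f t 1"
  unfolding T_op_def weighted_rearr_sup_def ..

lemma T_op_antimono:
  assumes "0 < x" "x \<le> y" "y < 1"
  shows "T_op I f y \<le> T_op I f x"
  unfolding T_op_eq weighted_rearr_sup_def
  using assms I_div_antimono[of x y] by (intro mult_mono ennreal_leI SUP_subset_mono) auto

lemma rearr_T_op_le:
  assumes "0 < s" "s < 1"
  shows "rearr (T_op I f) s \<le> T_op I f (s/2)"
proof -
  have "{x \<in> space M01. T_op I f (s/2) < T_op I f x} \<subseteq> {0<..<s/2}"
    using assms T_op_antimono[of "s/2" _ f] by (force simp: not_less[symmetric])
  then have "distrib (T_op I f) (T_op I f (s/2)) \<le> emeasure M01 {0<..<s/2}"
    unfolding distrib_def by (rule emeasure_mono) (use assms in \<open>auto intro!: sets_M01I\<close>)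
  also have "\<dots> \<le> ennreal s"
    using assms by (simp add: ennreal_leI)
  finally show ?thesis
    unfolding rearr_def by (intro Inf_lower) simp
qed

lemma T_op_half_le:
  assumes "0 < s" "s < 1"
  shows "T_op I f (s/2) \<le> 2 * ennreal (I s / s) * weighted_rearr_sup f (s/2) 1"
proof -
  have "I (s/2) / (s/2) \<le> 2 * (I s / s)"
    using assms I_mono[of "s/2" s] by (simp add: field_simps)
  then have "ennreal (I (s/2) / (s/2)) \<le> ennreal 2 * ennreal (I s / s)"
    using assms I_pos[of s] by (simp add: ennreal_mult[symmetric] ennreal_leI del: ennreal_numeral)
  then show ?thesis
    unfolding T_op_eq by (simp add: mult_right_mono)
qed

lemma weighted_rearr_sup_split:
  assumes "a \<le> m" "m \<le> b"
  shows "weighted_rearr_sup f a b \<le> weighted_rearr_sup f m b + weighted_rearr_sup f a m"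
proof -
  have "{a..<b} = {a..<m} \<union> {m..<b}"
    using assms by auto
  then have "weighted_rearr_sup f a b = sup (weighted_rearr_sup f m b) (weighted_rearr_sup f a m)"
    unfolding weighted_rearr_sup_def by (simp add: SUP_union sup_commute)
  then show ?thesis
    by (simp add: add_increasing add_increasing2)
qed

lemma weighted_rearr_sup_le_majorant:
  assumes "0 < t"
  shows "weighted_rearr_sup f t 1 \<le> weighted_max_majorant f t"
  unfolding weighted_rearr_sup_def weighted_max_majorant_def
proof (rule SUP_mono)
  fix u assume u: "u \<in> {t..<1}"
  have "ennreal u * rearr f u \<le> rearr_integral f u"
    using rearr_le_interval_integral[of 0 u f] u assms by (simp add: rearr_integral_def)
  moreover have "ennreal (u / I u) = ennreal (1 / I u) * ennreal u"
    using u assms I_pos[of u] by (simp add: ennreal_mult[symmetric])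
  ultimately have "ennreal (u / I u) * rearr f u \<le> ennreal (1 / I u) * rearr_integral f u"
    by (simp add: mult.assoc mult_left_mono)
  then show "\<exists>m\<in>{t..<1}. ennreal (u / I u) * rearr f u \<le> weighted_max f m"
    using u assms by (auto simp: weighted_max_eq)
qed

text \<open>For fixed \<open>t\<close> and \<open>s\<close>, the kernel \<open>w \<mapsto> 1 / I (max (s/2) w)\<close> on \<open>s/4 < w < t\<close>
  dominates the bounds \<open>u f\<^sup>*(u) / I(u) \<le> (2 / I(u)) \<integral>\<^bsub>u/2\<^esub>\<^bsup>u\<^esup> f\<^sup>*\<close>
  for all \<open>u \<in> [s/2, t)\<close> at once.\<close>

definition T_kernel :: "real \<Rightarrow> real \<Rightarrow> real \<Rightarrow> ennreal" where
  "T_kernel t s w = (if s/4 < w \<and> w < t then ennreal (1 / I_ext (max (s/2) w)) else 0)"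

lemma T_kernel_measurable [measurable]:
  "(\<lambda>(s, w). T_kernel t s w) \<in> borel_measurable (lborel \<Otimes>\<^sub>M lborel)"
  unfolding T_kernel_def[abs_def] by measurable

lemma weighted_rearr_sup_le_kernel:
  assumes "0 < s" "s < t" "t < 1"
  shows "weighted_rearr_sup f (s/2) t \<le> 2 * (\<integral>\<^sup>+ w. rearr f w * T_kernel t s w \<partial>lborel)"
  unfolding weighted_rearr_sup_def
proof (rule SUP_least)
  fix u assume u: "u \<in> {s/2..<t}"
  then have u_pos: "0 < u" and I_u: "0 < I u"
    using assms I_pos[of u] by auto
  have kernel_ge: "ennreal (1 / I u) \<le> T_kernel t s w" if w: "w \<in> {u/2<..<u}" for w
  proof -
    have "I (max (s/2) w) \<le> I u" and "0 < I (max (s/2) w)"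
      using u w assms by (auto intro!: I_mono I_pos simp: max_def)
    then show ?thesis
      using u w assms by (auto simp: T_kernel_def max_def intro!: ennreal_leI frac_le)
  qed
  have "ennreal (u / I u) * rearr f u = ennreal 2 * ennreal (1 / I u) * (ennreal (u - u/2) * rearr f u)"
    using u_pos I_u by (simp add: mult.assoc[symmetric] ennreal_mult[symmetric] del: ennreal_numeral)
  also have "\<dots> \<le> 2 * ennreal (1 / I u) * (\<integral>\<^sup>+ w \<in> {u/2<..<u}. rearr f w \<partial>lborel)"
    using u_pos rearr_le_interval_integral[of "u/2" u f] by (simp add: mult_left_mono)
  also have "\<dots> = 2 * (\<integral>\<^sup>+ w. rearr f w * (ennreal (1 / I u) * indicator {u/2<..<u} w) \<partial>lborel)"
    by (simp add: nn_integral_cmult[symmetric] mult_ac)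
  also have "\<dots> \<le> 2 * (\<integral>\<^sup>+ w. rearr f w * T_kernel t s w \<partial>lborel)"
    using kernel_ge by (intro mult_left_mono nn_integral_mono) (simp_all add: indicator_def mult_left_mono)
  finally show "ennreal (u / I u) * rearr f u \<le> 2 * (\<integral>\<^sup>+ w. rearr f w * T_kernel t s w \<partial>lborel)" .
qed

lemma rearr_T_op_le_kernel:
  assumes "0 < s" "s < t" "t < 1"
  shows "rearr (T_op I f) s
    \<le> 2 * ennreal (I s / s) * (weighted_rearr_sup f t 1 + 2 * (\<integral>\<^sup>+ w. rearr f w * T_kernel t s w \<partial>lborel))"
proof -
  have "rearr (T_op I f) s \<le> 2 * ennreal (I s / s) * weighted_rearr_sup f (s/2) 1"
    using assms rearr_T_op_le[of s f] T_op_half_le[of s f] by auto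
  also have "\<dots> \<le> 2 * ennreal (I s / s) * (weighted_rearr_sup f t 1 + weighted_rearr_sup f (s/2) t)"
    using assms by (intro mult_left_mono weighted_rearr_sup_split) auto
  also have "\<dots> \<le> 2 * ennreal (I s / s)
      * (weighted_rearr_sup f t 1 + 2 * (\<integral>\<^sup>+ w. rearr f w * T_kernel t s w \<partial>lborel))"
    using assms by (intro mult_left_mono add_left_mono weighted_rearr_sup_le_kernel) auto
  finally show ?thesis .
qed

lemma T_kernel_pointwise_le:
  assumes "0 < w" "w < t" "t < 1"
  shows "ennreal (I_ext s / s) * indicator {0<..<t} s * T_kernel t s w
    \<le> ennreal (1 / I w) * (ennreal (I_ext s / s) * indicator {0<..<min (2*w) t} s)
      + ennreal (1 / w) * indicator {2*w..4*w} s"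
    (is "?k s \<le> ?near s + ?far s")
proof (cases "0 < s \<and> s < t \<and> s/4 < w")
  case False
  then have "?k s = 0"
    by (auto simp: T_kernel_def indicator_def)
  then show ?thesis by (metis zero_le)
next
  case True
  then have s: "0 < s" "s < t" "s < 4 * w" and w_pos: "0 < w"
    using assms by auto
  show ?thesis
  proof (cases "s/2 < w")
    case True
    then have "?k s = ?near s"
      using s assms by (simp add: T_kernel_def indicator_def max_def ennreal_mult'[symmetric] mult.commute)
    then show ?thesis by simp
  next
    case False
    have I_half: "0 < I (s/2)" and "I s \<le> 2 * I (s/2)"
      using s assms I_pos[of "s/2"] I_le_ratio[of "s/2" s] by auto
    then have "w * I s \<le> (2 * w) * I (s/2)"
      using w_pos by simp
    also have "\<dots> \<le> s * I (s/2)"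
      using False I_half by (intro mult_right_mono) auto
    finally have "w * I s \<le> s * I (s/2)" .
    then have "I s / s * (1 / I (s/2)) \<le> 1 / w"
      using s I_half w_pos by (simp add: field_simps)
    have "?k s = ennreal (I s / s) * ennreal (1 / I (s/2))"
      using s False assms by (simp add: T_kernel_def indicator_def max_def)
    also have "\<dots> = ennreal (I s / s * (1 / I (s/2)))"
      using s I_half assms I_pos[of s] by (subst ennreal_mult) auto
    also have "\<dots> \<le> ?far s"
      using s False \<open>I s / s * (1 / I (s/2)) \<le> 1 / w\<close> by (simp add: indicator_def ennreal_leI)
    finally have "?k s \<le> ?far s" .
    then show ?thesis
      by (simp add: add_increasing)
  qed
qed

end

locale quasiconcave_integral_bound = quasiconcave_fun +
  fixes C :: real
  assumes C_nonneg: "0 \<le> C"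
    and integral_bound: "\<And>t. 0 < t \<Longrightarrow> t < 1 \<Longrightarrow>
      (\<integral>\<^sup>+ s \<in> {0<..<t}. ennreal (I s / s) \<partial>lborel) \<le> ennreal C * ennreal (I t)"
begin

lemma integral_bound_ext:
  assumes "0 < t" "t < 1"
  shows "(\<integral>\<^sup>+ s. ennreal (I_ext s / s) * indicator {0<..<t} s \<partial>lborel) \<le> ennreal C * ennreal (I t)"
proof -
  have "(\<integral>\<^sup>+ s. ennreal (I_ext s / s) * indicator {0<..<t} s \<partial>lborel)
      = (\<integral>\<^sup>+ s \<in> {0<..<t}. ennreal (I s / s) \<partial>lborel)"
    using assms by (intro nn_integral_cong) (simp add: indicator_def)
  then show ?thesis
    using integral_bound[OF assms] by simp
qed

lemma T_kernel_integral_le: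
  assumes "0 < t" "t < 1"
  shows "(\<integral>\<^sup>+ s. ennreal (I_ext s / s) * indicator {0<..<t} s * T_kernel t s w \<partial>lborel)
    \<le> (2 * ennreal C + 2) * indicator {0<..<t} w"
proof (cases "0 < w \<and> w < t")
  case False
  then have "(\<lambda>s. ennreal (I_ext s / s) * indicator {0<..<t} s * T_kernel t s w) = (\<lambda>_. 0)"
    by (auto simp: T_kernel_def indicator_def)
  then show ?thesis by simp
next
  case True
  then have w: "0 < w" "w < t" by auto
  define m where "m = min (2 * w) t"
  have m: "0 < m" "m < 1" "w \<le> m" "m \<le> 2 * w"
    using w assms by (auto simp: m_def)
  have I_w: "0 < I w" and I_m: "0 < I m"
    using w m assms by (auto intro: I_pos)
  have "I m \<le> (m / w) * I w"
    using m w by (intro I_le_ratio) auto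
  also have "\<dots> \<le> 2 * I w"
    using m w I_w by (intro mult_right_mono) (auto simp: field_simps)
  finally have "C * I m / I w \<le> C * 2"
    using I_w C_nonneg by (simp add: field_simps mult_left_mono)
  moreover have "ennreal (1 / I w) * (ennreal C * ennreal (I m)) = ennreal (C * I m / I w)"
    using I_w I_m C_nonneg by (simp add: ennreal_mult[symmetric])
  moreover have "ennreal (C * 2) = 2 * ennreal C"
    using C_nonneg by (simp add: ennreal_mult mult.commute)
  ultimately have near: "ennreal (1 / I w) * (ennreal C * ennreal (I m)) \<le> 2 * ennreal C"
    by (metis ennreal_leI)
  have far: "ennreal (1 / w) * ennreal (2 * w) = 2"
    using w by (simp add: ennreal_mult[symmetric])
  have "(\<integral>\<^sup>+ s. ennreal (I_ext s / s) * indicator {0<..<t} s * T_kernel t s w \<partial>lborel)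
      \<le> (\<integral>\<^sup>+ s. ennreal (1 / I w) * (ennreal (I_ext s / s) * indicator {0<..<m} s)
          + ennreal (1 / w) * indicator {2*w..4*w} s \<partial>lborel)"
    using w assms unfolding m_def by (intro nn_integral_mono T_kernel_pointwise_le)
  also have "\<dots> = ennreal (1 / I w) * (\<integral>\<^sup>+ s. ennreal (I_ext s / s) * indicator {0<..<m} s \<partial>lborel)
      + ennreal (1 / w) * ennreal (2 * w)"
    using w by (simp add: nn_integral_add nn_integral_cmult)
  also have "\<dots> \<le> 2 * ennreal C + 2"
  proof -
    have "ennreal (1 / I w) * (\<integral>\<^sup>+ s. ennreal (I_ext s / s) * indicator {0<..<m} s \<partial>lborel)
        \<le> ennreal (1 / I w) * (ennreal C * ennreal (I m))"
      using m by (intro mult_left_mono integral_bound_ext) auto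
    then show ?thesis
      using near far by (auto intro: add_mono)
  qed
  finally show ?thesis
    using w by simp
qed

lemma T_kernel_Fubini:
  fixes g :: "real \<Rightarrow> ennreal"
  assumes [measurable]: "g \<in> borel_measurable borel"
  shows "(\<integral>\<^sup>+ s. g s * (\<integral>\<^sup>+ w. rearr f w * T_kernel t s w \<partial>lborel) \<partial>lborel)
    = (\<integral>\<^sup>+ w. rearr f w * (\<integral>\<^sup>+ s. g s * T_kernel t s w \<partial>lborel) \<partial>lborel)"
proof -
  have "(\<integral>\<^sup>+ s. g s * (\<integral>\<^sup>+ w. rearr f w * T_kernel t s w \<partial>lborel) \<partial>lborel)
      = (\<integral>\<^sup>+ s. (\<integral>\<^sup>+ w. rearr f w * (g s * T_kernel t s w) \<partial>lborel) \<partial>lborel)"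
    by (intro nn_integral_cong) (simp add: nn_integral_cmult[symmetric] mult_ac)
  also have "\<dots> = (\<integral>\<^sup>+ w. (\<integral>\<^sup>+ s. rearr f w * (g s * T_kernel t s w) \<partial>lborel) \<partial>lborel)"
    by (rule lborel_pair.Fubini'[symmetric]) measurable
  also have "\<dots> = (\<integral>\<^sup>+ w. rearr f w * (\<integral>\<^sup>+ s. g s * T_kernel t s w \<partial>lborel) \<partial>lborel)"
    by (intro nn_integral_cong nn_integral_cmult) measurable
  finally show ?thesis .
qed

lemma rearr_integral_T_op_le:
  assumes t: "0 < t" "t < 1"
  shows "rearr_integral (T_op I f) t
    \<le> 2 * weighted_rearr_sup f t 1 * (ennreal C * ennreal (I t)) + 4 * ((2 * ennreal C + 2) * rearr_integral f t)"
proof -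
  define A where "A = weighted_rearr_sup f t 1"
  define \<Phi> where "\<Phi> s = (\<integral>\<^sup>+ w. rearr f w * T_kernel t s w \<partial>lborel)" for s
  define V where "V s = ennreal (I_ext s / s) * indicator {0<..<t} s" for s
  have V_meas [measurable]: "V \<in> borel_measurable borel"
    unfolding V_def[abs_def] by measurable
  have "rearr (T_op I f) s * indicator {0<..<t} s \<le> 2 * A * V s + 4 * (V s * \<Phi> s)" for s
  proof (cases "s \<in> {0<..<t}")
    case True
    then have "rearr (T_op I f) s \<le> 2 * ennreal (I s / s) * (A + 2 * \<Phi> s)"
      using t rearr_T_op_le_kernel[of s t f] by (simp add: A_def \<Phi>_def)
    then show ?thesis
      using True t by (simp add: V_def distrib_left mult_ac)
  qed simp
  then have "rearr_integral (T_op I f) t \<le> (\<integral>\<^sup>+ s. 2 * A * V s + 4 * (V s * \<Phi> s) \<partial>lborel)"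
    unfolding rearr_integral_def by (intro nn_integral_mono) simp
  also have "\<dots> = 2 * A * (\<integral>\<^sup>+ s. V s \<partial>lborel)
      + 4 * (\<integral>\<^sup>+ w. rearr f w * (\<integral>\<^sup>+ s. V s * T_kernel t s w \<partial>lborel) \<partial>lborel)"
    unfolding \<Phi>_def by (simp add: nn_integral_add nn_integral_cmult T_kernel_Fubini)
  also have "\<dots> \<le> 2 * A * (ennreal C * ennreal (I t))
      + 4 * (\<integral>\<^sup>+ w. rearr f w * ((2 * ennreal C + 2) * indicator {0<..<t} w) \<partial>lborel)"
    using t T_kernel_integral_le[OF t] integral_bound_ext[OF t]
    by (intro add_mono mult_left_mono nn_integral_mono) (simp_all add: V_def)
  also have "(\<integral>\<^sup>+ w. rearr f w * ((2 * ennreal C + 2) * indicator {0<..<t} w) \<partial>lborel)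
      = (2 * ennreal C + 2) * rearr_integral f t"
    unfolding rearr_integral_def by (subst nn_integral_cmult[symmetric]) (simp_all add: mult_ac)
  finally show ?thesis
    unfolding A_def .
qed

lemma weighted_max_T_op_le:
  assumes t: "0 < t" "t < 1"
  shows "weighted_max (T_op I f) t \<le> ennreal (10 * C + 8) * weighted_max_majorant f t"
proof -
  let ?S = "weighted_rearr_sup f t 1" and ?D = "weighted_max_majorant f t"
  have inv: "ennreal (1 / I t) * ennreal (I t) = 1"
    using I_pos[OF t] by (simp add: ennreal_mult[symmetric])
  have "weighted_max (T_op I f) t
      \<le> ennreal (1 / I t) * (2 * ?S * (ennreal C * ennreal (I t)) + 4 * ((2 * ennreal C + 2) * rearr_integral f t))"
    using t by (simp add: weighted_max_eq mult_left_mono rearr_integral_T_op_le)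
  also have "\<dots> = 2 * ennreal C * ?S * (ennreal (1 / I t) * ennreal (I t))
      + 4 * (2 * ennreal C + 2) * (ennreal (1 / I t) * rearr_integral f t)"
    by (simp only: distrib_left mult_ac)
  also have "\<dots> = 2 * ennreal C * ?S + 4 * (2 * ennreal C + 2) * weighted_max f t"
    using t by (simp add: inv weighted_max_eq)
  also have "\<dots> \<le> 2 * ennreal C * ?D + 4 * (2 * ennreal C + 2) * ?D"
    using t by (intro add_mono mult_left_mono weighted_rearr_sup_le_majorant weighted_max_le_majorant) auto
  also have "\<dots> = ennreal (10 * C + 8) * ?D"
    using C_nonneg
    by (simp add: ennreal_plus ennreal_mult' distrib_left add.assoc[symmetric] distrib_right[symmetric])
  finally show ?thesis .
qed

lemma ri_norm_weighted_max_T_op_le: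
  assumes \<rho>: "ri_norm \<rho>"
  shows "\<rho> (weighted_max (T_op I f)) \<le> ennreal (8 * (10 * C + 8)) * \<rho> (weighted_max f)"
proof -
  have K: "0 \<le> 10 * C + 8"
    using C_nonneg by simp
  have "\<rho> (weighted_max (T_op I f)) \<le> \<rho> (\<lambda>t. ennreal (10 * C + 8) * weighted_max_majorant f t)"
    using weighted_max_majorant_measurable[of f] weighted_max_T_op_le
    by (intro ri_norm_mono[OF \<rho> _ weighted_max_measurable]) auto
  also have "\<dots> = ennreal (10 * C + 8) * \<rho> (weighted_max_majorant f)"
    using K by (rule ri_norm_cmult[OF \<rho> weighted_max_majorant_measurable])
  also have "\<dots> \<le> ennreal (10 * C + 8) * (8 * \<rho> (weighted_max f))"
    by (intro mult_left_mono ri_norm_weighted_max_majorant_le[OF \<rho>]) simp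
  also have "\<dots> = ennreal (8 * (10 * C + 8)) * \<rho> (weighted_max f)"
    using K by (subst ennreal_mult) (simp_all add: mult_ac)
  finally show ?thesis .
qed

end

theorem theorem3p14:
  fixes \<rho> :: "(real \<Rightarrow> ennreal) \<Rightarrow> ennreal" and I :: "real \<Rightarrow> real"
  assumes "ri_norm \<rho>"
    and "quasiconcave I"
    and "\<exists>C::real. \<forall>t \<in> {0<..<1}.
           (\<integral>\<^sup>+ s \<in> {0<..<t}. ennreal (I s / s) \<partial>lborel) \<le> ennreal C * ennreal (I t)"
  shows "\<exists>C::real. C > 0 \<and> (\<forall>f \<in> borel_measurable M01.
           \<rho> (\<lambda>t. ennreal (t / I t) * rearr2 (T_op I f) t)
             \<le> ennreal C * \<rho> (\<lambda>t. ennreal (t / I t) * rearr2 f t))"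
proof -
  obtain C where C: "\<forall>t \<in> {0<..<1}.
      (\<integral>\<^sup>+ s \<in> {0<..<t}. ennreal (I s / s) \<partial>lborel) \<le> ennreal C * ennreal (I t)"
    using assms(3) by blast
  have "ennreal (max C 0) = ennreal C"
    by (simp add: max_def ennreal_neg)
  then interpret quasiconcave_integral_bound I "max C 0"
    using assms(2) C by unfold_locales auto
  show ?thesis
    using ri_norm_weighted_max_T_op_le[OF assms(1)]
    by (intro exI[of _ "8 * (10 * max C 0 + 8)"]) (auto simp: weighted_max_def[abs_def])
qed

end
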